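(* Let $M\subset\mathbb{R}^{2d}$ be a smooth closed hypersurface bounding a quadratically convex domain containing the origin in its interior. For every point $x$ in the exterior of $M$ there exists a unique point $n_-(x)\in M$ with $R(n_-(x))\sim -x$, and a unique point $n_+(x)\in M$ with $R(n_+(x))\sim x$. Explicitly, in terms of the outward unit normal Gauss map $G:M\to S^{2d-1}$, $$n_+(x)=G^{-1}\Big(-\frac{Jx}{|x|}\Big),\qquad n_-(x)=G^{-1}\Big(\frac{Jx}{|x|}\Big).$$
   Context: $\mathbb{R}^{2d}$ carries its standard inner product, norm $|\cdot|$, complex structure $J$ (orthogonal, $J^2=-I$) and symplectic form $\omega(u,v)=\langle Ju,v\rangle$. For $q\in M$ the Reeb vector $R(q)$ is the unique vector with $\omega(v,R(q))=0$ for all $v\in T_qM$ and $\omega(q,R(q))=1$. The notation $a\sim b$ means $a=\lambda b$ for some $\lambda>0$. The Gauss map $G$ sends $q\in M$ to the outward unit normal of $M$ at $q$; it is a diffeomorphism under the convexity assumption. *)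

theory Defs
  imports "HOL-Analysis.Analysis"
begin

text \<open>D k hs x is the k-th
  derivative at x applied to the directions in hs (length k).\<close>
definition smooth_fun :: "('a::euclidean_space \<Rightarrow> real) \<Rightarrow> bool" where
  "smooth_fun F \<longleftrightarrow>
     (\<exists>D :: nat \<Rightarrow> 'a list \<Rightarrow> 'a \<Rightarrow> real.
        (\<forall>x. D 0 [] x = F x) \<and>
        (\<forall>k hs x. length hs = k \<longrightarrow>
            ((D k hs) has_derivative (\<lambda>h. D (Suc k) (h # hs) x)) (at x)))"

definition grad :: "('a::euclidean_space \<Rightarrow> real) \<Rightarrow> 'a \<Rightarrow> 'a" where
  "grad F q = (\<Sum>b\<in>Basis. frechet_derivative F (at q) b *\<^sub>R b)"

definition hess :: "('a::euclidean_space \<Rightarrow> real) \<Rightarrow> 'a \<Rightarrow> 'a \<Rightarrow> 'a" where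
  "hess F q = frechet_derivative (grad F) (at q)"

definition complex_structure :: "('a::euclidean_space \<Rightarrow> 'a) \<Rightarrow> bool" where
  "complex_structure J \<longleftrightarrow> linear J \<and> (\<forall>u v. J u \<bullet> J v = u \<bullet> v) \<and> (\<forall>u. J (J u) = - u)"

definition omega :: "('a::euclidean_space \<Rightarrow> 'a) \<Rightarrow> 'a \<Rightarrow> 'a \<Rightarrow> real" where
  "omega J u v = J u \<bullet> v"

definition hsurf :: "('a::euclidean_space \<Rightarrow> real) \<Rightarrow> 'a set" where
  "hsurf F = {q. F q = 0}"

definition tangent_space :: "('a::euclidean_space \<Rightarrow> real) \<Rightarrow> 'a \<Rightarrow> 'a set" where
  "tangent_space F q = {v. v \<bullet> grad F q = 0}"

text \<open>Smooth closed hypersurface M = {F = 0} (regular level set) bounding the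
  compact convex domain {F \<le> 0}, which is quadratically convex (second
  fundamental form positive definite) and contains 0 in its interior.\<close>
definition quad_convex_hypersurface :: "('a::euclidean_space \<Rightarrow> real) \<Rightarrow> bool" where
  "quad_convex_hypersurface F \<longleftrightarrow>
     smooth_fun F \<and>
     bounded {x. F x \<le> 0} \<and> convex {x. F x \<le> 0} \<and>
     F 0 < 0 \<and>
     (\<forall>q\<in>hsurf F. grad F q \<noteq> 0) \<and>
     (\<forall>q\<in>hsurf F. \<forall>v\<in>tangent_space F q. v \<noteq> 0 \<longrightarrow> hess F q v \<bullet> v > 0)"

definition gauss :: "('a::euclidean_space \<Rightarrow> real) \<Rightarrow> 'a \<Rightarrow> 'a" where
  "gauss F q = (1 / norm (grad F q)) *\<^sub>R grad F q"

definition reeb :: "('a::euclidean_space \<Rightarrow> 'a) \<Rightarrow> ('a \<Rightarrow> real) \<Rightarrow> 'a \<Rightarrow> 'a" where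
  "reeb J F q = (THE r. (\<forall>v\<in>tangent_space F q. omega J v r = 0) \<and> omega J q r = 1)"

definition pos_sim :: "'a::real_vector \<Rightarrow> 'a \<Rightarrow> bool" where
  "pos_sim a b \<longleftrightarrow> (\<exists>c>0. a = c *\<^sub>R b)"

end

theory Submission
  imports Defs
begin

text \<open>
  Write g = \<nabla>F(p) for p \<in> M. The Reeb condition says that -J R(p) is orthogonal to the
  tangent space, so R(p) = J g / \<langle>g, p\<rangle>, and \<langle>g, p\<rangle> > 0 because the origin lies inside
  the convex domain. Hence R(p) \<sim> y iff g \<sim> -J y iff G(p) = -J y / |y|, and everything
  reduces to the Gauss map being a bijection onto the unit sphere. It is onto because a
  maximiser of \<langle>u, \<cdot>\<rangle> over the domain lies on M with outward normal u. It is injective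
  because quadratic convexity forces every supporting hyperplane to touch the domain in
  a single point: along a segment from p inside the tangent hyperplane, F would vanish to
  first order while its second derivative \<langle>Hess F(p) v, v\<rangle> is positive.
\<close>

lemma linear_eq_inner_sum_Basis:
  fixes L :: "'a::euclidean_space \<Rightarrow> real"
  assumes "linear L"
  shows "(\<Sum>b\<in>Basis. L b *\<^sub>R b) \<bullet> h = L h"
proof -
  have "(\<Sum>b\<in>Basis. L b *\<^sub>R b) \<bullet> h = (\<Sum>b\<in>Basis. (h \<bullet> b) * L b)"
    by (simp add: inner_sum_left) (rule sum.cong, simp_all add: inner_commute)
  also have "\<dots> = L (\<Sum>b\<in>Basis. (h \<bullet> b) *\<^sub>R b)"
    using assms by (simp add: linear_sum linear_scale)
  also have "\<dots> = L h"
    by (simp add: euclidean_representation)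
  finally show ?thesis .
qed

lemma smooth_fun_has_derivative:
  fixes F :: "'a::euclidean_space \<Rightarrow> real"
  assumes "smooth_fun F"
  shows smooth_fun_has_derivative_grad: "(F has_derivative (\<lambda>h. grad F x \<bullet> h)) (at x)"
    and smooth_fun_has_derivative_hess: "(grad F has_derivative hess F x) (at x)"
proof -
  obtain D :: "nat \<Rightarrow> 'a list \<Rightarrow> 'a \<Rightarrow> real" where D0: "\<And>x. D 0 [] x = F x"
    and DS: "\<And>k hs x. length hs = k \<Longrightarrow> ((D k hs) has_derivative (\<lambda>h. D (Suc k) (h # hs) x)) (at x)"
    using assms unfolding smooth_fun_def by blast
  have "D 0 [] = F"
    using D0 by blast
  then have FD: "(F has_derivative (\<lambda>h. D 1 [h] x)) (at x)" for x
    using DS[of "[]" 0 x] by simp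
  have grad_eq: "grad F = (\<lambda>x. \<Sum>b\<in>Basis. D 1 [b] x *\<^sub>R b)"
    by (auto simp: grad_def frechet_derivative_at[OF FD, symmetric])
  have "(\<lambda>h. grad F x \<bullet> h) = (\<lambda>h. D 1 [h] x)"
    using linear_eq_inner_sum_Basis[OF has_derivative_linear[OF FD]] by (simp add: grad_eq)
  with FD show "(F has_derivative (\<lambda>h. grad F x \<bullet> h)) (at x)"
    by simp
  have grad_deriv: "(grad F has_derivative (\<lambda>h. \<Sum>b\<in>Basis. D 2 [h, b] x *\<^sub>R b)) (at x)"
    unfolding grad_eq
    by (intro has_derivative_sum has_derivative_scaleR_left)
       (use DS[of "[_]" 1 x] in \<open>simp add: numeral_2_eq_2\<close>)
  then show "(grad F has_derivative hess F x) (at x)"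
    by (simp add: hess_def frechet_derivative_at[OF grad_deriv, symmetric])
qed

lemma has_vector_derivative_along_line:
  assumes "(f has_derivative f') (at (p + t *\<^sub>R v))"
  shows "((\<lambda>s. f (p + s *\<^sub>R v)) has_vector_derivative f' v) (at t)"
proof -
  have "((\<lambda>s. p + s *\<^sub>R v) has_vector_derivative v) (at t)"
    by (auto intro!: derivative_eq_intros)
  from vector_derivative_diff_chain_within[OF this has_derivative_at_withinI[OF assms]]
  show ?thesis
    by (simp add: o_def)
qed

lemma has_real_derivative_along_line:
  fixes f :: "'a::real_inner \<Rightarrow> real"
  assumes "(f has_derivative (\<lambda>h. g \<bullet> h)) (at (p + t *\<^sub>R v))"
  shows "((\<lambda>s. f (p + s *\<^sub>R v)) has_real_derivative g \<bullet> v) (at t)"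
  using has_vector_derivative_along_line[OF assms]
  by (simp add: has_real_derivative_iff_has_vector_derivative)

lemma DERIV_second_pos_inc_right:
  fixes f f' :: "real \<Rightarrow> real"
  assumes deriv: "\<And>s. (f has_real_derivative f' s) (at s)"
    and "(f' has_real_derivative l) (at x)" "l > 0" "f' x = 0"
  shows "\<exists>d>0. \<forall>h>0. h < d \<longrightarrow> f x < f (x + h)"
proof -
  obtain d where "d > 0" and f'_pos: "\<And>h. 0 < h \<Longrightarrow> h < d \<Longrightarrow> 0 < f' (x + h)"
    using DERIV_pos_inc_right[OF assms(2,3)] \<open>f' x = 0\<close> by auto
  have "f x < f (x + h)" if "0 < h" "h < d" for h
  proof (rule DERIV_pos_imp_increasing_open[of x "x + h" f])
    show "\<exists>y. (f has_real_derivative y) (at s) \<and> 0 < y" if "x < s" "s < x + h" for s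
      using deriv f'_pos[of "s - x"] that \<open>h < d\<close> by auto
    show "continuous_on {x..x + h} f"
      using deriv by (intro continuous_at_imp_continuous_on ballI DERIV_isCont) blast
  qed (use that in simp)
  with \<open>d > 0\<close> show ?thesis
    by blast
qed

lemma convex_sublevel_segment:
  fixes F :: "'a::real_vector \<Rightarrow> real"
  assumes "convex {x. F x \<le> 0}" "F p \<le> 0" "F y \<le> 0" "0 \<le> t" "t \<le> 1"
  shows "F (p + t *\<^sub>R (y - p)) \<le> 0"
proof -
  have "(1 - t) *\<^sub>R p + t *\<^sub>R y \<in> {x. F x \<le> 0}"
    using assms unfolding convex_alt by blast
  moreover have "(1 - t) *\<^sub>R p + t *\<^sub>R y = p + t *\<^sub>R (y - p)"
    by (simp add: algebra_simps)
  ultimately show ?thesis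
    by simp
qed

lemma convex_sublevel_supporting_hyperplane:
  fixes F :: "'a::real_inner \<Rightarrow> real"
  assumes deriv: "(F has_derivative (\<lambda>h. g \<bullet> h)) (at p)"
    and convex: "convex {x. F x \<le> 0}" and "F p = 0" "F y \<le> 0"
  shows "g \<bullet> (y - p) \<le> 0"
proof (rule ccontr)
  assume "\<not> g \<bullet> (y - p) \<le> 0"
  moreover have "((\<lambda>s. F (p + s *\<^sub>R (y - p))) has_real_derivative g \<bullet> (y - p)) (at 0)"
    using deriv by (intro has_real_derivative_along_line) simp
  ultimately obtain d where "d > 0"
    and increase: "\<And>h. 0 < h \<Longrightarrow> h < d \<Longrightarrow> F p < F (p + h *\<^sub>R (y - p))"
    by (auto dest!: DERIV_pos_inc_right)
  define t where "t = min (d / 2) 1"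
  have "0 < t" "t < d" "t \<le> 1"
    using \<open>d > 0\<close> by (auto simp: t_def)
  then have "F p < F (p + t *\<^sub>R (y - p))"
    by (intro increase)
  moreover have "F (p + t *\<^sub>R (y - p)) \<le> 0"
    using \<open>0 < t\<close> \<open>t \<le> 1\<close> \<open>F p = 0\<close> \<open>F y \<le> 0\<close> by (intro convex_sublevel_segment[OF convex]) auto
  ultimately show False
    using \<open>F p = 0\<close> by simp
qed

lemma nonneg_multiple_if_inner_nonpos:
  fixes g u :: "'a::real_inner"
  assumes "g \<noteq> 0" and nonpos: "\<And>v. g \<bullet> v < 0 \<Longrightarrow> u \<bullet> v \<le> 0"
  shows "\<exists>c\<ge>0. u = c *\<^sub>R g"
proof -
  define c where "c = u \<bullet> g / (g \<bullet> g)"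
  define w where "w = u - c *\<^sub>R g"
  have "g \<bullet> g > 0"
    using \<open>g \<noteq> 0\<close> by simp
  then have "g \<bullet> w = 0"
    by (simp add: w_def c_def inner_diff_right inner_commute)
  then have uw: "u \<bullet> w = w \<bullet> w"
    by (simp add: w_def inner_diff_left inner_commute)
  have ug: "u \<bullet> g \<ge> 0"
    using nonpos[of "- g"] \<open>g \<bullet> g > 0\<close> by simp
  have "w = 0"
  proof (rule ccontr)
    assume "w \<noteq> 0"
    define t where "t = (u \<bullet> g + 1) / (w \<bullet> w)"
    have "g \<bullet> (t *\<^sub>R w - g) < 0"
      using \<open>g \<bullet> w = 0\<close> \<open>g \<bullet> g > 0\<close> by (simp add: inner_diff_right)
    moreover have "u \<bullet> (t *\<^sub>R w - g) = 1"
      using \<open>w \<noteq> 0\<close> by (simp add: t_def inner_diff_right uw)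
    ultimately show False
      using nonpos by fastforce
  qed
  moreover have "c \<ge> 0"
    using ug \<open>g \<bullet> g > 0\<close> by (simp add: c_def)
  ultimately show ?thesis
    by (auto simp: w_def)
qed

lemma multiple_if_orthogonal_to_orthogonal:
  fixes g w :: "'a::real_inner"
  assumes "g \<noteq> 0" and orth: "\<And>v. v \<bullet> g = 0 \<Longrightarrow> v \<bullet> w = 0"
  shows "\<exists>c. w = c *\<^sub>R g"
proof -
  define v where "v = w - (w \<bullet> g / (g \<bullet> g)) *\<^sub>R g"
  have "v \<bullet> g = 0"
    using \<open>g \<noteq> 0\<close> by (simp add: v_def inner_diff_left)
  with orth have "v \<bullet> v = 0"
    by (simp add: v_def inner_diff_right)
  then show ?thesis
    by (auto simp: v_def)
qed

lemma pos_sim_iff_normalized_eq: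
  fixes a b :: "'a::real_normed_vector"
  assumes "a \<noteq> 0" "b \<noteq> 0"
  shows "pos_sim a b \<longleftrightarrow> (1 / norm a) *\<^sub>R a = (1 / norm b) *\<^sub>R b"
proof
  assume "pos_sim a b"
  then obtain c where "c > 0" "a = c *\<^sub>R b"
    by (auto simp: pos_sim_def)
  then show "(1 / norm a) *\<^sub>R a = (1 / norm b) *\<^sub>R b"
    by simp
next
  assume normalized_eq: "(1 / norm a) *\<^sub>R a = (1 / norm b) *\<^sub>R b"
  have "a = norm a *\<^sub>R ((1 / norm a) *\<^sub>R a)"
    using \<open>a \<noteq> 0\<close> by simp
  also have "\<dots> = (norm a / norm b) *\<^sub>R b"
    by (simp add: normalized_eq)
  finally have "a = (norm a / norm b) *\<^sub>R b" .
  moreover have "norm a / norm b > 0"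
    using assms by simp
  ultimately show "pos_sim a b"
    unfolding pos_sim_def by blast
qed

lemma pos_sim_scaleR_left:
  assumes "c > 0"
  shows "pos_sim (c *\<^sub>R a) b \<longleftrightarrow> pos_sim a b"
proof
  assume "pos_sim (c *\<^sub>R a) b"
  then obtain k where "k > 0" "c *\<^sub>R a = k *\<^sub>R b"
    by (auto simp: pos_sim_def)
  then have "(1 / c) *\<^sub>R (c *\<^sub>R a) = (1 / c) *\<^sub>R (k *\<^sub>R b)"
    by simp
  then have "a = (k / c) *\<^sub>R b"
    using \<open>c > 0\<close> by simp
  then show "pos_sim a b"
    using \<open>k > 0\<close> \<open>c > 0\<close> unfolding pos_sim_def by (intro exI[of _ "k / c"]) simp
next
  assume "pos_sim a b"
  then obtain k where "k > 0" "a = k *\<^sub>R b"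
    by (auto simp: pos_sim_def)
  then show "pos_sim (c *\<^sub>R a) b"
    using \<open>c > 0\<close> unfolding pos_sim_def by (intro exI[of _ "c * k"]) simp
qed

lemma complex_structureD:
  assumes "complex_structure J"
  shows complex_structure_linear: "linear J"
    and complex_structure_inner: "J u \<bullet> J v = u \<bullet> v"
    and complex_structure_twice: "J (J u) = - u"
  using assms by (auto simp: complex_structure_def)

lemma norm_complex_structure:
  assumes "complex_structure J"
  shows "norm (J x) = norm x"
  using complex_structure_inner[OF assms] by (simp add: norm_eq_sqrt_inner)

lemma pos_sim_complex_structure:
  assumes "complex_structure J"
  shows "pos_sim (J a) b \<longleftrightarrow> pos_sim a (- J b)"
proof -
  have J: "J (c *\<^sub>R x) = c *\<^sub>R J x" "J (- x) = - J x" for c x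
    using complex_structure_linear[OF assms] by (simp_all add: linear_scale linear_neg)
  have "J a = c *\<^sub>R b \<longleftrightarrow> a = c *\<^sub>R (- J b)" for c
    by (metis J complex_structure_twice[OF assms] minus_minus scaleR_minus_right)
  then show ?thesis
    by (simp add: pos_sim_def)
qed

locale quad_convex_domain =
  fixes F :: "'a::euclidean_space \<Rightarrow> real"
  assumes quad_convex: "quad_convex_hypersurface F"
begin

lemma smooth_F: "smooth_fun F"
  using quad_convex by (simp add: quad_convex_hypersurface_def)

lemma F_has_derivative: "(F has_derivative (\<lambda>h. grad F x \<bullet> h)) (at x)"
  and grad_has_derivative: "(grad F has_derivative hess F x) (at x)"
  by (rule smooth_fun_has_derivative[OF smooth_F])+

lemma continuous_on_F: "continuous_on UNIV F"
  by (intro continuous_at_imp_continuous_on ballI has_derivative_continuous[OF F_has_derivative])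

lemma bounded_domain: "bounded {x. F x \<le> 0}"
  and convex_domain: "convex {x. F x \<le> 0}"
  and origin_inside: "F 0 < 0"
  and grad_nonzero: "p \<in> hsurf F \<Longrightarrow> grad F p \<noteq> 0"
  and hess_pos: "p \<in> hsurf F \<Longrightarrow> v \<bullet> grad F p = 0 \<Longrightarrow> v \<noteq> 0 \<Longrightarrow> hess F p v \<bullet> v > 0"
  using quad_convex by (simp_all add: quad_convex_hypersurface_def tangent_space_def)

lemma grad_inner_le_0:
  assumes "p \<in> hsurf F" "F y \<le> 0"
  shows "grad F p \<bullet> (y - p) \<le> 0"
  using assms by (intro convex_sublevel_supporting_hyperplane[OF F_has_derivative convex_domain])
    (auto simp: hsurf_def)

lemma grad_inner_less_0:
  assumes p: "p \<in> hsurf F" and "F y \<le> 0" "y \<noteq> p"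
  shows "grad F p \<bullet> (y - p) < 0"
proof (rule ccontr)
  define v where "v = y - p"
  assume "\<not> grad F p \<bullet> (y - p) < 0"
  then have "v \<bullet> grad F p = 0"
    using grad_inner_le_0[OF p \<open>F y \<le> 0\<close>] by (simp add: v_def inner_commute)
  then have "hess F p v \<bullet> v > 0"
    using hess_pos[OF p] \<open>y \<noteq> p\<close> by (simp add: v_def)
  have F_deriv: "((\<lambda>s. F (p + s *\<^sub>R v)) has_real_derivative grad F (p + s *\<^sub>R v) \<bullet> v) (at s)"
    for s by (intro has_real_derivative_along_line F_has_derivative)
  have "((\<lambda>x. grad F x \<bullet> v) has_derivative (\<lambda>h. hess F p h \<bullet> v)) (at (p + 0 *\<^sub>R v))"
    using has_derivative_inner_left[OF grad_has_derivative] by simp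
  then have "((\<lambda>s. grad F (p + s *\<^sub>R v) \<bullet> v) has_real_derivative hess F p v \<bullet> v) (at 0)"
    unfolding has_real_derivative_iff_has_vector_derivative
    by (rule has_vector_derivative_along_line)
  from DERIV_second_pos_inc_right[OF F_deriv this \<open>hess F p v \<bullet> v > 0\<close>]
  obtain d where "d > 0" and increase: "\<And>h. 0 < h \<Longrightarrow> h < d \<Longrightarrow> F p < F (p + h *\<^sub>R v)"
    using \<open>v \<bullet> grad F p = 0\<close> by (auto simp: inner_commute)
  define t where "t = min (d / 2) 1"
  have "0 < t" "t < d" "t \<le> 1"
    using \<open>d > 0\<close> by (auto simp: t_def)
  then have "F p < F (p + t *\<^sub>R v)"
    by (intro increase)
  moreover have "F p = 0"
    using p by (simp add: hsurf_def)
  moreover have "F (p + t *\<^sub>R v) \<le> 0"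
    using \<open>0 < t\<close> \<open>t \<le> 1\<close> \<open>F p = 0\<close> \<open>F y \<le> 0\<close> unfolding v_def
    by (intro convex_sublevel_segment[OF convex_domain]) auto
  ultimately show False
    by simp
qed

lemma grad_inner_pos:
  assumes "p \<in> hsurf F"
  shows "grad F p \<bullet> p > 0"
proof -
  have "p \<noteq> 0"
    using assms origin_inside by (auto simp: hsurf_def)
  then show ?thesis
    using grad_inner_less_0[OF assms, of 0] origin_inside by simp
qed

lemma gauss_inner_less_0:
  assumes "p \<in> hsurf F" "F y \<le> 0" "y \<noteq> p"
  shows "gauss F p \<bullet> (y - p) < 0"
  using grad_inner_less_0[OF assms] grad_nonzero[OF assms(1)]
  by (simp add: gauss_def divide_less_0_iff)

lemma gauss_inj: "inj_on (gauss F) (hsurf F)"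
proof (rule inj_onI, rule ccontr)
  fix p q
  assume p: "p \<in> hsurf F" and q: "q \<in> hsurf F" and "gauss F p = gauss F q" "p \<noteq> q"
  then have "gauss F p \<bullet> (q - p) < 0" "gauss F q \<bullet> (p - q) < 0"
    using gauss_inner_less_0[OF p, of q] gauss_inner_less_0[OF q, of p] by (auto simp: hsurf_def)
  with \<open>gauss F p = gauss F q\<close> show False
    by (simp add: inner_diff_right)
qed

lemma gauss_surj:
  assumes "norm u = 1"
  shows "\<exists>q\<in>hsurf F. gauss F q = u"
proof -
  define K where "K = {x. F x \<le> 0}"
  have compact: "compact K"
    unfolding K_def compact_eq_bounded_closed
    using bounded_domain continuous_on_F by (auto intro: closed_Collect_le)
  have nonempty: "K \<noteq> {}"
    using origin_inside by (auto simp: K_def intro!: exI[of _ 0])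
  have "continuous_on K (\<lambda>y. u \<bullet> y)"
    by (intro continuous_intros)
  from continuous_attains_sup[OF compact nonempty this]
  obtain q where "q \<in> K" and q_max: "\<And>y. y \<in> K \<Longrightarrow> u \<bullet> y \<le> u \<bullet> q"
    by blast
  have "u \<bullet> u = 1"
    using assms by (simp add: power2_norm_eq_inner[symmetric])
  have "F q = 0"
  proof (rule ccontr)
    assume "F q \<noteq> 0"
    with \<open>q \<in> K\<close> have "q \<in> {x. F x < 0}"
      by (simp add: K_def)
    moreover have "open {x. F x < 0}"
      using continuous_on_F by (auto intro: open_Collect_less)
    ultimately obtain e where "e > 0" and "ball q e \<subseteq> {x. F x < 0}"
      by (meson openE)
    moreover have "q + (e / 2) *\<^sub>R u \<in> ball q e"
      using \<open>e > 0\<close> assms by (simp add: dist_norm)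
    ultimately have "q + (e / 2) *\<^sub>R u \<in> K"
      by (auto simp: K_def)
    from q_max[OF this] show False
      using \<open>e > 0\<close> \<open>u \<bullet> u = 1\<close> by (simp add: inner_add_right)
  qed
  then have "q \<in> hsurf F"
    by (simp add: hsurf_def)
  have "u \<bullet> v \<le> 0" if "grad F q \<bullet> v < 0" for v
  proof -
    have "((\<lambda>s. F (q + s *\<^sub>R v)) has_real_derivative grad F q \<bullet> v) (at 0)"
      by (intro has_real_derivative_along_line) (simp add: F_has_derivative)
    with that obtain d where "d > 0" and decrease: "\<And>h. 0 < h \<Longrightarrow> h < d \<Longrightarrow> F (q + h *\<^sub>R v) < F q"
      by (auto dest!: DERIV_neg_dec_right)
    then have "q + (d / 2) *\<^sub>R v \<in> K"
      using \<open>F q = 0\<close> by (simp add: K_def less_imp_le)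
    then have "(d / 2) * (u \<bullet> v) \<le> 0"
      using q_max[of "q + (d / 2) *\<^sub>R v"] by (simp add: inner_add_right)
    then show ?thesis
      using \<open>d > 0\<close> by (simp add: mult_le_0_iff)
  qed
  then obtain c where "c \<ge> 0" "u = c *\<^sub>R grad F q"
    using nonneg_multiple_if_inner_nonpos[OF grad_nonzero[OF \<open>q \<in> hsurf F\<close>]] by blast
  moreover from this have "c = 1 / norm (grad F q)"
    using assms grad_nonzero[OF \<open>q \<in> hsurf F\<close>] by (simp add: field_simps)
  ultimately have "gauss F q = u"
    by (simp add: gauss_def)
  with \<open>q \<in> hsurf F\<close> show ?thesis
    by blast
qed

lemma reeb_eq:
  assumes J: "complex_structure J" and p: "p \<in> hsurf F"
  shows "reeb J F p = (1 / (grad F p \<bullet> p)) *\<^sub>R J (grad F p)"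
proof -
  define g where "g = grad F p"
  have "g \<noteq> 0" "g \<bullet> p > 0"
    using grad_nonzero[OF p] grad_inner_pos[OF p] by (simp_all add: g_def)
  have J_scaleR: "J (c *\<^sub>R x) = c *\<^sub>R J x" for c x
    using complex_structure_linear[OF J] by (simp add: linear_scale)
  note J_inner = complex_structure_inner[OF J]
  have "(THE r. (\<forall>v\<in>tangent_space F p. omega J v r = 0) \<and> omega J p r = 1)
      = (1 / (g \<bullet> p)) *\<^sub>R J g"
  proof (rule the_equality)
    show "(\<forall>v\<in>tangent_space F p. omega J v ((1 / (g \<bullet> p)) *\<^sub>R J g) = 0)
        \<and> omega J p ((1 / (g \<bullet> p)) *\<^sub>R J g) = 1"
      using \<open>g \<bullet> p > 0\<close>
      by (auto simp: omega_def tangent_space_def J_inner g_def[symmetric] inner_commute)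
  next
    fix r
    assume r: "(\<forall>v\<in>tangent_space F p. omega J v r = 0) \<and> omega J p r = 1"
    define w where "w = - J r"
    have "J w = r"
      using complex_structure_linear[OF J] complex_structure_twice[OF J]
      by (simp add: w_def linear_neg)
    then have "v \<bullet> w = omega J v r" for v
      by (simp add: omega_def J_inner flip: \<open>J w = r\<close>)
    then obtain c where w: "w = c *\<^sub>R g"
      using r multiple_if_orthogonal_to_orthogonal[OF \<open>g \<noteq> 0\<close>, of w]
      by (auto simp: tangent_space_def g_def)
    have "p \<bullet> w = 1"
      using r \<open>\<And>v. v \<bullet> w = omega J v r\<close> by simp
    then have "c * (g \<bullet> p) = 1"
      by (simp add: w inner_commute)
    then have "c = 1 / (g \<bullet> p)"
      using \<open>g \<bullet> p > 0\<close> by (simp add: eq_divide_eq)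
    then show "r = (1 / (g \<bullet> p)) *\<^sub>R J g"
      using \<open>J w = r\<close> by (simp add: w J_scaleR)
  qed
  then show ?thesis
    by (simp add: reeb_def g_def)
qed

lemma pos_sim_reeb_iff:
  assumes J: "complex_structure J" and p: "p \<in> hsurf F" and "y \<noteq> 0"
  shows "pos_sim (reeb J F p) y \<longleftrightarrow> gauss F p = - ((1 / norm y) *\<^sub>R J y)"
proof -
  have "J y \<noteq> 0"
    using \<open>y \<noteq> 0\<close> norm_complex_structure[OF J] by (metis norm_eq_zero)
  have "pos_sim (reeb J F p) y \<longleftrightarrow> pos_sim (J (grad F p)) y"
    using grad_inner_pos[OF p] by (simp add: reeb_eq[OF J p] pos_sim_scaleR_left)
  also have "\<dots> \<longleftrightarrow> pos_sim (grad F p) (- J y)"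
    by (rule pos_sim_complex_structure[OF J])
  also have "\<dots> \<longleftrightarrow> gauss F p = - ((1 / norm y) *\<^sub>R J y)"
    using grad_nonzero[OF p] \<open>J y \<noteq> 0\<close>
    by (simp add: pos_sim_iff_normalized_eq gauss_def norm_complex_structure[OF J])
  finally show ?thesis .
qed

lemma reeb_pos_sim_iff_eq_inv_gauss:
  assumes J: "complex_structure J" and "y \<noteq> 0"
  shows "p \<in> hsurf F \<and> pos_sim (reeb J F p) y
    \<longleftrightarrow> p = the_inv_into (hsurf F) (gauss F) (- ((1 / norm y) *\<^sub>R J y))"
proof -
  define u where "u = - ((1 / norm y) *\<^sub>R J y)"
  have "norm u = 1"
    using \<open>y \<noteq> 0\<close> by (simp add: u_def norm_complex_structure[OF J])
  then obtain q where q: "q \<in> hsurf F" "gauss F q = u"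
    using gauss_surj by blast
  then have "the_inv_into (hsurf F) (gauss F) u = q"
    by (intro the_inv_into_f_eq gauss_inj)
  moreover have "p \<in> hsurf F \<and> gauss F p = u \<longleftrightarrow> p = q"
    using q gauss_inj by (auto dest: inj_onD)
  ultimately show ?thesis
    using pos_sim_reeb_iff[OF J _ \<open>y \<noteq> 0\<close>] by (auto simp: u_def)
qed

end

theorem lemma2p4:
  fixes F :: "'a::euclidean_space \<Rightarrow> real" and J :: "'a \<Rightarrow> 'a" and x :: 'a
  assumes "complex_structure J"
    and "quad_convex_hypersurface F"
    and "F x > 0"
  shows "(\<exists>!p. p \<in> hsurf F \<and> pos_sim (reeb J F p) (- x))
       \<and> (\<exists>!p. p \<in> hsurf F \<and> pos_sim (reeb J F p) x)
       \<and> (THE p. p \<in> hsurf F \<and> pos_sim (reeb J F p) x)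
            = the_inv_into (hsurf F) (gauss F) (- ((1 / norm x) *\<^sub>R J x))
       \<and> (THE p. p \<in> hsurf F \<and> pos_sim (reeb J F p) (- x))
            = the_inv_into (hsurf F) (gauss F) ((1 / norm x) *\<^sub>R J x)"
proof -
  interpret quad_convex_domain F
    by (fact quad_convex_domain.intro[OF assms(2)])
  have "x \<noteq> 0"
    using assms(3) origin_inside by auto
  have "J (- x) = - J x"
    using complex_structure_linear[OF assms(1)] by (simp add: linear_neg)
  then show ?thesis
    using reeb_pos_sim_iff_eq_inv_gauss[OF assms(1) \<open>x \<noteq> 0\<close>]
      reeb_pos_sim_iff_eq_inv_gauss[OF assms(1), of "- x"] \<open>x \<noteq> 0\<close>
    by simp
qed

end
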